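(* Let $n\ge2$ and $P=(a_1,\dots,a_{n-1},0)$ with $0<a_i<\tfrac12$ for all $i\le n-1$. Then the vertices of $\mathcal R(P)$ are exactly the following points. (1) Standard vertices: for each labeled set $S\subset[\![n-1]\!]$ with $0\le K(S)\le1$, the points $v_S^\pm$ with coordinates $x_i=a_i-\tfrac12+\varepsilon_i$ for $i\in S$, $x_i=\tfrac12-a_i$ for $i\in\widetilde S$, and $x_n=\pm K(S)$ (if $K(S)=0$ then $v_S^+=v_S^-$). (2) Middle vertices: for each labeled set $S$ and $k\in S$ with $K(S)<0<K(S\setminus\{k\})$, the point $v^0_{S,k}$ with $x_i=a_i-\tfrac12+\varepsilon_i$ for $i\in S\setminus\{k\}$, $x_i=\tfrac12-a_i$ for $i\in\widetilde S$, $x_k=a_k-\tfrac12+\varepsilon_k-\frac{K(S)}{2a_k-\varepsilon_k}$, and $x_n=0$. (3) Truncating vertices: for each labeled set $S$ and $k\notin S$ together with a label $\varepsilon_k\in\{0,1\}$ such that $K(S\cup\{k\})<1<K(S)$, the points $v^\pm_{S,k}$ with $x_i=a_i-\tfrac12+\varepsilon_i$ for $i\in S$, $x_i=\tfrac12-a_i$ for $i\in\widetilde S\setminus\{k\}$, $x_k=a_k-\tfrac12+\varepsilon_k+\frac{1-K(S\cup\{k\})}{2a_k-\varepsilon_k}$, and $x_n=\pm1$. There are no other vertices of $\mathcal R(P)$.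
   Context: For $P=(a_1,\dots,a_{n-1},0)$ with $0<a_i<\tfrac12$, $\mathcal R(P)\subset\mathbb R^n$ is the polytope defined by the inequalities: $a_i-\tfrac12\le x_i\le a_i+\tfrac12$ for $1\le i\le n-1$; $-1\le x_n\le 1$; and for every $\delta=(\delta_1,\dots,\delta_{n-1})\in\{0,1\}^{n-1}$, $x_n\le\tfrac12+\sum_{i=1}^{n-1}(2a_i-\delta_i)(x_i-\tfrac12\delta_i)$ and $x_n\ge-\tfrac12-\sum_{i=1}^{n-1}(2a_i-\delta_i)(x_i-\tfrac12\delta_i)$. (This is the set of points $Q$ at least as close to $P$ as to any point of the $\sim$-orbit "neighbours" of $P$, where $\sim$ on $\mathbb R^n$ is generated by $x\sim x+e_i$, $i\le n-1$, and $(x_1,\dots,x_n)\sim(1-x_1,\dots,1-x_{n-1},x_n+1)$.) Write $[\![n-1]\!]=\{1,\dots,n-1\}$. A labeled set is a subset $S\subset[\![n-1]\!]$ together with a function $S\to\{0,1\}$, $i\mapsto\varepsilon_i$. For $0<a\le\tfrac12$ put $\Delta_a=a-2a^2=\tfrac18-2(a-\tfrac14)^2$; $\Delta(S)=\sum_{i\in S}\Delta_{a_i}$; $\widetilde S=[\![n-1]\!]\setminus S$; and $K(S)=\tfrac12-\Delta(S)+\Delta(\widetilde S)$ (depending only on the underlying set of $S$). *)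

theory Defs
  imports "HOL-Analysis.Analysis"
begin

text \<open>Points of R^n are represented as pairs (x, t) :: real^'m \<times> real, where the
  finite index type 'm plays the role of [[n-1]] (so n - 1 = CARD('m) \<ge> 1, n \<ge> 2)
  and t is the last coordinate x_n.  P = (a_1,...,a_{n-1},0) is given by a :: real^'m::finite.\<close>

definition RP :: "real^'m::finite \<Rightarrow> ((real^'m) \<times> real) set" where
  "RP a = {(x, t) | x t.
     (\<forall>i. a$i - 1/2 \<le> x$i \<and> x$i \<le> a$i + 1/2) \<and> -1 \<le> t \<and> t \<le> 1 \<and>
     (\<forall>\<delta>::'m \<Rightarrow> real. (\<forall>i. \<delta> i \<in> {0,1}) \<longrightarrow>
        t \<le> 1/2 + (\<Sum>i\<in>UNIV. (2 * a$i - \<delta> i) * (x$i - \<delta> i / 2)) \<and>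
        t \<ge> -1/2 - (\<Sum>i\<in>UNIV. (2 * a$i - \<delta> i) * (x$i - \<delta> i / 2)))}"

definition Delta_a :: "real \<Rightarrow> real" where
  "Delta_a b = b - 2 * b^2"

definition DeltaS :: "real^'m::finite \<Rightarrow> 'm set \<Rightarrow> real" where
  "DeltaS a S = (\<Sum>i\<in>S. Delta_a (a$i))"

definition KS :: "real^'m::finite \<Rightarrow> 'm set \<Rightarrow> real" where
  "KS a S = 1/2 - DeltaS a S + DeltaS a (UNIV - S)"

text \<open>A labeled set: a subset S with labels \<epsilon>_i \<in> {0,1} for i \<in> S
  (values of \<epsilon> outside S are irrelevant).\<close>
definition labeled :: "'m set \<Rightarrow> ('m \<Rightarrow> real) \<Rightarrow> bool" where
  "labeled S \<epsilon> \<longleftrightarrow> (\<forall>i\<in>S. \<epsilon> i \<in> {0,1})"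

definition base_coord :: "real^'m::finite \<Rightarrow> 'm set \<Rightarrow> ('m \<Rightarrow> real) \<Rightarrow> 'm \<Rightarrow> real" where
  "base_coord a S \<epsilon> i = (if i \<in> S then a$i - 1/2 + \<epsilon> i else 1/2 - a$i)"

definition standard_vertices :: "real^'m::finite \<Rightarrow> ((real^'m) \<times> real) set" where
  "standard_vertices a = {((\<chi> i. base_coord a S \<epsilon> i), s * KS a S) | S \<epsilon> s.
      labeled S \<epsilon> \<and> 0 \<le> KS a S \<and> KS a S \<le> 1 \<and> s \<in> {1, -1}}"

definition middle_vertices :: "real^'m::finite \<Rightarrow> ((real^'m) \<times> real) set" where
  "middle_vertices a = {((\<chi> i. if i = k then a$k - 1/2 + \<epsilon> k - KS a S / (2 * a$k - \<epsilon> k)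
                               else base_coord a S \<epsilon> i), 0) | S \<epsilon> k.
      labeled S \<epsilon> \<and> k \<in> S \<and> KS a S < 0 \<and> 0 < KS a (S - {k})}"

definition truncating_vertices :: "real^'m::finite \<Rightarrow> ((real^'m) \<times> real) set" where
  "truncating_vertices a = {((\<chi> i. if i = k then a$k - 1/2 + \<epsilon> k
                                 + (1 - KS a (insert k S)) / (2 * a$k - \<epsilon> k)
                               else base_coord a S \<epsilon> i), s) | S \<epsilon> k s.
      labeled S \<epsilon> \<and> k \<notin> S \<and> \<epsilon> k \<in> {0,1} \<and>
      KS a (insert k S) < 1 \<and> 1 < KS a S \<and> s \<in> {1, -1}}"

end

theory Submission
  imports Defs
begin

(*
  The minimum over delta in the constraints defining R(P) is attained coordinatewise, so
  R(P) = {(x, t). x in the box, |t| <= 1, |t| <= F x} with F x = 1/2 + sum_i h_{a_i}(x_i), where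
  h_b(y) = min (2 b y) ((2 b - 1) (y - 1/2)) is a concave tent on [b - 1/2, b + 1/2] with value
  -Delta_b at both ends and peak Delta_b at 1/2 - b.  As R(P) is convex, a point is extreme iff
  no symmetric perturbation (x + d, t + u), (x - d, t - u) stays in R(P).

  At an extreme point |t| = F x <= 1, and all coordinates but at most one lie at one of the
  breakpoints b - 1/2, 1/2 - b, b + 1/2 of their tent: two free coordinates could be moved
  against each other keeping F fixed.  Without a free coordinate the point is a standard vertex.
  A free coordinate x_k enters F linearly with nonzero slope, so F x is 0 or 1, for otherwise x_k
  and t could move together; this gives the middle and truncating vertices.  Conversely, at
  these points |t| = F x forces every tent to be affine along a symmetric perturbation, which
  pins the coordinates at breakpoints; when F x = 0 or |t| = 1 both perturbed heights are pinned
  to F x as well, and the free coordinate cannot move since its tent is strictly monotone there.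
*)

definition tent :: "real \<Rightarrow> real \<Rightarrow> real" where
  "tent b y = min (2 * b * y) ((2 * b - 1) * (y - 1/2))"

lemma tent_le_left: "tent b y \<le> 2 * b * y"
  and tent_le_right: "tent b y \<le> (2 * b - 1) * (y - 1/2)"
  by (simp_all add: tent_def)

lemma tent_left: "y \<le> 1/2 - b \<Longrightarrow> tent b y = 2 * b * y"
  and tent_right: "1/2 - b \<le> y \<Longrightarrow> tent b y = (2 * b - 1) * (y - 1/2)"
  by (simp_all add: tent_def min_def algebra_simps)

lemma tent_concave:
  assumes "0 \<le> l" "l \<le> 1"
  shows "l * tent b y + (1 - l) * tent b z \<le> tent b (l * y + (1 - l) * z)"
proof -
  have "l * tent b y + (1 - l) * tent b z \<le> l * (2 * b * y) + (1 - l) * (2 * b * z)"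
    using assms by (intro add_mono mult_left_mono) (simp_all add: tent_le_left)
  also have "\<dots> = 2 * b * (l * y + (1 - l) * z)"
    by (simp add: algebra_simps)
  finally have left: "l * tent b y + (1 - l) * tent b z \<le> 2 * b * (l * y + (1 - l) * z)" .
  have "l * tent b y + (1 - l) * tent b z
      \<le> l * ((2 * b - 1) * (y - 1/2)) + (1 - l) * ((2 * b - 1) * (z - 1/2))"
    using assms by (intro add_mono mult_left_mono) (simp_all add: tent_le_right)
  also have "\<dots> = (2 * b - 1) * (l * y + (1 - l) * z - 1/2)"
    by (simp add: field_simps)
  finally show ?thesis
    using left by (simp add: tent_def)
qed

lemma tent_midpoint_le: "tent b (y + d) + tent b (y - d) \<le> 2 * tent b y"
proof -
  have "1/2 * (y + d) + (1 - 1/2) * (y - d) = y"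
    by (simp add: field_simps)
  then show ?thesis
    using tent_concave[of "1/2" b "y + d" "y - d"] by simp
qed

lemma tent_peak: "tent b (1/2 - b) = Delta_a b"
  by (simp add: tent_left Delta_a_def power2_eq_square algebra_simps)

lemma tent_around_peak: "tent b (1/2 - b + d) + tent b (1/2 - b - d) = 2 * Delta_a b - \<bar>d\<bar>"
  by (cases "d \<ge> 0") (auto simp: tent_def min_def Delta_a_def power2_eq_square algebra_simps)

lemma tent_box_ends:
  "b \<le> 1/2 \<Longrightarrow> tent b (b - 1/2) = - Delta_a b"
  "0 \<le> b \<Longrightarrow> tent b (b + 1/2) = - Delta_a b"
  by (simp_all add: tent_left tent_right Delta_a_def power2_eq_square algebra_simps)

lemma Delta_a_pos: "0 < b \<Longrightarrow> b < 1/2 \<Longrightarrow> 0 < Delta_a b"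
  by (simp add: Delta_a_def power2_eq_square algebra_simps)

lemma tent_lipschitz:
  assumes "0 \<le> b" "b \<le> 1/2"
  shows "\<bar>tent b y - tent b z\<bar> \<le> \<bar>y - z\<bar>"
proof -
  have left: "\<bar>2 * b * y - 2 * b * z\<bar> \<le> \<bar>y - z\<bar>"
  proof -
    have "\<bar>2 * b * y - 2 * b * z\<bar> = 2 * b * \<bar>y - z\<bar>"
      using assms by (simp add: abs_mult right_diff_distrib[symmetric])
    also have "\<dots> \<le> \<bar>y - z\<bar>"
      using assms by (intro mult_left_le_one_le) auto
    finally show ?thesis .
  qed
  have right: "\<bar>(2 * b - 1) * (y - 1/2) - (2 * b - 1) * (z - 1/2)\<bar> \<le> \<bar>y - z\<bar>"
  proof -
    have "\<bar>(2 * b - 1) * (y - 1/2) - (2 * b - 1) * (z - 1/2)\<bar> = (1 - 2 * b) * \<bar>y - z\<bar>"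
      using assms by (simp add: abs_mult right_diff_distrib[symmetric] abs_minus_commute)
    also have "\<dots> \<le> \<bar>y - z\<bar>"
      using assms by (intro mult_left_le_one_le) auto
    finally show ?thesis .
  qed
  show ?thesis
    using left right unfolding tent_def min_def by (auto simp: abs_if split: if_splits)
qed

lemma tent_branch_point:
  assumes b: "0 < b" "b < 1/2" and e: "e \<in> {0, 1}" and u: "0 \<le> u" "u \<le> 2 * Delta_a b"
  defines "y \<equiv> b - 1/2 + e + u / (2 * b - e)"
  shows "b - 1/2 \<le> y" "y \<le> b + 1/2" "tent b y = u - Delta_a b"
proof -
  consider "e = 0" | "e = 1"
    using e by blast
  then have "b - 1/2 \<le> y \<and> y \<le> b + 1/2 \<and> tent b y = u - Delta_a b"
  proof cases
    case 1
    define q where "q = u / (2 * b)"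
    have u_eq: "u = 2 * b * q"
      using b by (simp add: q_def)
    have "2 * Delta_a b = 2 * b * (1 - 2 * b)"
      by (simp add: Delta_a_def power2_eq_square algebra_simps)
    then have q: "0 \<le> q" "q \<le> 1 - 2 * b"
      using b u unfolding u_eq by (simp_all add: zero_le_mult_iff)
    have "y = b - 1/2 + q"
      by (simp add: y_def 1 q_def)
    moreover have "tent b (b - 1/2 + q) = u - Delta_a b"
      using q by (simp add: tent_left u_eq Delta_a_def power2_eq_square algebra_simps)
    ultimately show ?thesis
      using q b by simp
  next
    case 2
    define q where "q = u / (1 - 2 * b)"
    have u_eq: "u = (1 - 2 * b) * q"
      using b by (simp add: q_def)
    have "2 * Delta_a b = (1 - 2 * b) * (2 * b)"
      by (simp add: Delta_a_def power2_eq_square algebra_simps)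
    then have q: "0 \<le> q" "q \<le> 2 * b"
      using b u unfolding u_eq by (simp_all add: zero_le_mult_iff)
    have "u / (2 * b - 1) = - q"
      using b by (simp add: q_def divide_simps) (simp add: algebra_simps)
    then have "y = b + 1/2 - q"
      by (simp add: y_def 2)
    moreover have "tent b (b + 1/2 - q) = u - Delta_a b"
      using q by (simp add: tent_right u_eq Delta_a_def power2_eq_square algebra_simps)
    ultimately show ?thesis
      using q b by simp
  qed
  then show "b - 1/2 \<le> y" "y \<le> b + 1/2" "tent b y = u - Delta_a b"
    by simp_all
qed

definition tent_breakpoints :: "real \<Rightarrow> real set" where
  "tent_breakpoints b = {b - 1/2, 1/2 - b, b + 1/2}"

lemma tent_branch_inverse:
  assumes b: "0 < b" "b < 1/2" and box: "b - 1/2 \<le> y" "y \<le> b + 1/2" "y \<notin> tent_breakpoints b"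
  defines "e \<equiv> if 1/2 - b < y then 1 else 0 :: real"
  shows "y = b - 1/2 + e + (tent b y + Delta_a b) / (2 * b - e)"
    and "- Delta_a b < tent b y" "tent b y < Delta_a b"
proof -
  have y: "b - 1/2 < y" "y < b + 1/2" "y \<noteq> 1/2 - b"
    using box by (auto simp: tent_breakpoints_def)
  have "y = b - 1/2 + e + (tent b y + Delta_a b) / (2 * b - e) \<and>
        0 < tent b y + Delta_a b \<and> 0 < Delta_a b - tent b y"
  proof (cases "1/2 - b < y")
    case True
    have up: "tent b y + Delta_a b = (2 * b - 1) * (y - (b + 1/2))"
      and down: "Delta_a b - tent b y = (1 - 2 * b) * (y - (1/2 - b))"
      using True by (simp_all add: tent_right Delta_a_def power2_eq_square algebra_simps)
    have "(tent b y + Delta_a b) / (2 * b - 1) = y - (b + 1/2)"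
      unfolding up using b by simp
    moreover have "0 < (2 * b - 1) * (y - (b + 1/2))" "0 < (1 - 2 * b) * (y - (1/2 - b))"
      using b y True by (simp_all add: mult_neg_neg)
    ultimately show ?thesis
      using True up down by (simp add: e_def)
  next
    case False
    then have "y < 1/2 - b"
      using y by simp
    then have up: "tent b y + Delta_a b = 2 * b * (y - (b - 1/2))"
      and down: "Delta_a b - tent b y = 2 * b * (1/2 - b - y)"
      by (simp_all add: tent_left Delta_a_def power2_eq_square algebra_simps)
    have "(tent b y + Delta_a b) / (2 * b) = y - (b - 1/2)"
      unfolding up using b by simp
    moreover have "0 < 2 * b * (y - (b - 1/2))" "0 < 2 * b * (1/2 - b - y)"
      using b y \<open>y < 1/2 - b\<close> by simp_all
    ultimately show ?thesis
      using False up down by (simp add: e_def)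
  qed
  then show "y = b - 1/2 + e + (tent b y + Delta_a b) / (2 * b - e)"
    and "- Delta_a b < tent b y" "tent b y < Delta_a b"
    by linarith+
qed

lemma tent_locally_linear:
  assumes b: "0 < b" "b < 1/2" and box: "b - 1/2 \<le> y" "y \<le> b + 1/2" "y \<notin> tent_breakpoints b"
  obtains \<eta> \<sigma> where "0 < \<eta>" "\<sigma> \<noteq> 0" "\<bar>\<sigma>\<bar> < 1"
    "\<And>s. \<bar>s\<bar> \<le> \<eta> \<Longrightarrow> b - 1/2 \<le> y + s \<and> y + s \<le> b + 1/2 \<and> tent b (y + s) = tent b y + \<sigma> * s"
proof (cases "y < 1/2 - b")
  case True
  define \<eta> where "\<eta> = min (y - (b - 1/2)) (1/2 - b - y)"
  have "b - 1/2 \<le> y + s \<and> y + s \<le> b + 1/2 \<and> tent b (y + s) = tent b y + 2 * b * s"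
    if "\<bar>s\<bar> \<le> \<eta>" for s
  proof -
    have "y + s \<le> 1/2 - b" "b - 1/2 \<le> y + s"
      using that by (auto simp: \<eta>_def)
    then show ?thesis
      using True b by (simp add: tent_left algebra_simps)
  qed
  moreover have "0 < \<eta>" "2 * b \<noteq> 0" "\<bar>2 * b\<bar> < 1"
    using True box b by (auto simp: \<eta>_def tent_breakpoints_def)
  ultimately show ?thesis
    using that by blast
next
  case False
  define \<eta> where "\<eta> = min (b + 1/2 - y) (y - (1/2 - b))"
  have "b - 1/2 \<le> y + s \<and> y + s \<le> b + 1/2 \<and> tent b (y + s) = tent b y + (2 * b - 1) * s"
    if "\<bar>s\<bar> \<le> \<eta>" for s
  proof -
    have "1/2 - b \<le> y + s" "y + s \<le> b + 1/2"
      using that by (auto simp: \<eta>_def)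
    then show ?thesis
      using False b by (simp add: tent_right algebra_simps)
  qed
  moreover have "0 < \<eta>" "2 * b - 1 \<noteq> 0" "\<bar>2 * b - 1\<bar> < 1"
    using False box b by (auto simp: \<eta>_def tent_breakpoints_def)
  ultimately show ?thesis
    using that by blast
qed

lemma tent_symmetric_eq_imp_zero:
  assumes b: "0 < b" "b < 1/2" and y: "y \<noteq> 1/2 - b"
    and eq: "tent b (y + d) = tent b y" "tent b (y - d) = tent b y"
  shows "d = 0"
proof (rule ccontr)
  assume "d \<noteq> 0"
  have eq': "tent b (y - \<bar>d\<bar>) = tent b y" "tent b (y + \<bar>d\<bar>) = tent b y"
    using eq by (cases "0 \<le> d"; simp)+
  show False
  proof (cases "y < 1/2 - b")
    case True
    have "tent b (y - \<bar>d\<bar>) \<le> 2 * b * (y - \<bar>d\<bar>)" "2 * b * (y - \<bar>d\<bar>) < 2 * b * y"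
      using b \<open>d \<noteq> 0\<close> by (simp_all add: tent_le_left)
    then show False
      using eq' True by (simp add: tent_left)
  next
    case False
    have "tent b (y + \<bar>d\<bar>) \<le> (2 * b - 1) * (y + \<bar>d\<bar> - 1/2)"
      "(2 * b - 1) * (y + \<bar>d\<bar> - 1/2) < (2 * b - 1) * (y - 1/2)"
      using b \<open>d \<noteq> 0\<close> by (simp_all add: tent_le_right mult_strict_left_mono_neg)
    then show False
      using eq' False by (simp add: tent_right)
  qed
qed

lemma tent_breakpoints_in_box:
  "0 \<le> b \<Longrightarrow> b \<le> 1/2 \<Longrightarrow> y \<in> tent_breakpoints b \<Longrightarrow> b - 1/2 \<le> y \<and> y \<le> b + 1/2"
  by (auto simp: tent_breakpoints_def)

lemma tent_midpoint_eq_at_breakpoint: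
  assumes "y \<in> tent_breakpoints b"
    and "b - 1/2 \<le> y + d" "y + d \<le> b + 1/2" "b - 1/2 \<le> y - d" "y - d \<le> b + 1/2"
    and "tent b (y + d) + tent b (y - d) = 2 * tent b y"
  shows "d = 0"
  using assms tent_around_peak[of b d] tent_peak[of b] by (auto simp: tent_breakpoints_def)

definition height :: "real^'m::finite \<Rightarrow> real^'m \<Rightarrow> real" where
  "height a x = 1/2 + (\<Sum>i\<in>UNIV. tent (a$i) (x$i))"

definition in_box :: "real^'m::finite \<Rightarrow> real^'m \<Rightarrow> bool" where
  "in_box a x \<longleftrightarrow> (\<forall>i. a$i - 1/2 \<le> x$i \<and> x$i \<le> a$i + 1/2)"

lemma mem_RP_iff: "(x, t) \<in> RP a \<longleftrightarrow> in_box a x \<and> \<bar>t\<bar> \<le> 1 \<and> \<bar>t\<bar> \<le> height a x"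
proof -
  define g where "g \<delta> = (\<Sum>i\<in>UNIV. (2 * a$i - \<delta> i) * (x$i - \<delta> i / 2))" for \<delta> :: "'a \<Rightarrow> real"
  have g_ge: "(\<Sum>i\<in>UNIV. tent (a$i) (x$i)) \<le> g \<delta>" if "\<forall>i. \<delta> i \<in> {0, 1}" for \<delta>
    unfolding g_def
  proof (rule sum_mono)
    fix i
    show "tent (a$i) (x$i) \<le> (2 * a$i - \<delta> i) * (x$i - \<delta> i / 2)"
      using that[rule_format, of i] tent_le_left[of "a$i" "x$i"] tent_le_right[of "a$i" "x$i"]
      by auto
  qed
  define \<delta>\<^sub>0 where "\<delta>\<^sub>0 i = (if 1/2 - a$i \<le> x$i then 1 else 0 :: real)" for i
  have \<delta>\<^sub>0: "\<forall>i. \<delta>\<^sub>0 i \<in> {0, 1}"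
    by (simp add: \<delta>\<^sub>0_def)
  have g_\<delta>\<^sub>0: "g \<delta>\<^sub>0 = (\<Sum>i\<in>UNIV. tent (a$i) (x$i))"
    unfolding g_def by (rule sum.cong) (simp_all add: \<delta>\<^sub>0_def tent_left tent_right)
  have "(x, t) \<in> RP a \<longleftrightarrow> (\<forall>i. a$i - 1/2 \<le> x$i \<and> x$i \<le> a$i + 1/2) \<and> - 1 \<le> t \<and> t \<le> 1 \<and>
      (\<forall>\<delta>. (\<forall>i. \<delta> i \<in> {0, 1}) \<longrightarrow> t \<le> 1/2 + g \<delta> \<and> - 1/2 - g \<delta> \<le> t)"
    unfolding RP_def g_def by simp
  also have "\<dots> \<longleftrightarrow> in_box a x \<and> \<bar>t\<bar> \<le> 1 \<and>
      (\<forall>\<delta>. (\<forall>i. \<delta> i \<in> {0, 1}) \<longrightarrow> t \<le> 1/2 + g \<delta> \<and> - 1/2 - g \<delta> \<le> t)"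
    unfolding in_box_def abs_le_iff by auto
  also have "(\<forall>\<delta>. (\<forall>i. \<delta> i \<in> {0, 1}) \<longrightarrow> t \<le> 1/2 + g \<delta> \<and> - 1/2 - g \<delta> \<le> t) \<longleftrightarrow>
      \<bar>t\<bar> \<le> height a x"
  proof
    assume "\<forall>\<delta>. (\<forall>i. \<delta> i \<in> {0, 1}) \<longrightarrow> t \<le> 1/2 + g \<delta> \<and> - 1/2 - g \<delta> \<le> t"
    then have "t \<le> 1/2 + g \<delta>\<^sub>0 \<and> - 1/2 - g \<delta>\<^sub>0 \<le> t"
      using \<delta>\<^sub>0 by blast
    then show "\<bar>t\<bar> \<le> height a x"
      unfolding height_def abs_le_iff g_\<delta>\<^sub>0 by linarith
  next
    assume t: "\<bar>t\<bar> \<le> height a x"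
    show "\<forall>\<delta>. (\<forall>i. \<delta> i \<in> {0, 1}) \<longrightarrow> t \<le> 1/2 + g \<delta> \<and> - 1/2 - g \<delta> \<le> t"
    proof (intro allI impI)
      fix \<delta> :: "'a \<Rightarrow> real"
      assume "\<forall>i. \<delta> i \<in> {0, 1}"
      then have "(\<Sum>i\<in>UNIV. tent (a$i) (x$i)) \<le> g \<delta>"
        by (rule g_ge)
      with t show "t \<le> 1/2 + g \<delta> \<and> - 1/2 - g \<delta> \<le> t"
        unfolding height_def abs_le_iff by linarith
    qed
  qed
  finally show ?thesis .
qed

lemma height_concave:
  assumes "0 \<le> l" "l \<le> 1"
  shows "l * height a x + (1 - l) * height a y \<le> height a (l *\<^sub>R x + (1 - l) *\<^sub>R y)"
proof -
  have "l * height a x + (1 - l) * height a y =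
      1/2 + (l * (\<Sum>i\<in>UNIV. tent (a$i) (x$i)) + (1 - l) * (\<Sum>i\<in>UNIV. tent (a$i) (y$i)))"
    by (simp add: height_def field_simps)
  also have "\<dots> = 1/2 + (\<Sum>i\<in>UNIV. l * tent (a$i) (x$i) + (1 - l) * tent (a$i) (y$i))"
    by (simp add: sum.distrib sum_distrib_left)
  also have "\<dots> \<le> 1/2 + (\<Sum>i\<in>UNIV. tent (a$i) (l * x$i + (1 - l) * y$i))"
    using tent_concave[OF assms] by (simp add: sum_mono)
  finally show ?thesis
    by (simp add: height_def)
qed

lemma convex_RP: "convex (RP a)"
proof (rule convexI)
  fix p q and u v :: real
  assume p: "p \<in> RP a" and q: "q \<in> RP a" and uv: "0 \<le> u" "0 \<le> v" "u + v = 1"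
  obtain x t y s where pq: "p = (x, t)" "q = (y, s)"
    by (cases p, cases q)
  have P: "in_box a x" "\<bar>t\<bar> \<le> 1" "\<bar>t\<bar> \<le> height a x" and Q: "in_box a y" "\<bar>s\<bar> \<le> 1" "\<bar>s\<bar> \<le> height a y"
    using p q by (simp_all add: pq mem_RP_iff)
  have v: "v = 1 - u"
    using uv by simp
  have abs_le: "\<bar>u * t + v * s\<bar> \<le> u * \<bar>t\<bar> + v * \<bar>s\<bar>"
    using abs_triangle_ineq[of "u * t" "v * s"] uv by (simp add: abs_mult)
  have "in_box a (u *\<^sub>R x + v *\<^sub>R y)"
    unfolding in_box_def
  proof
    fix i
    have "u * (a$i - 1/2) + v * (a$i - 1/2) \<le> u * x$i + v * y$i"
      "u * x$i + v * y$i \<le> u * (a$i + 1/2) + v * (a$i + 1/2)"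
      using P(1) Q(1) uv unfolding in_box_def by (intro add_mono mult_left_mono; simp)+
    moreover have "u * c + v * c = c" for c
      using uv(3) by (metis distrib_right mult_1)
    ultimately show "a$i - 1/2 \<le> (u *\<^sub>R x + v *\<^sub>R y)$i \<and> (u *\<^sub>R x + v *\<^sub>R y)$i \<le> a$i + 1/2"
      by simp
  qed
  moreover have "u * \<bar>t\<bar> + v * \<bar>s\<bar> \<le> u * 1 + v * 1"
    using uv P Q by (intro add_mono mult_left_mono) auto
  moreover have "u * \<bar>t\<bar> + v * \<bar>s\<bar> \<le> u * height a x + v * height a y"
    using uv P Q by (intro add_mono mult_left_mono) auto
  moreover have "u * height a x + v * height a y \<le> height a (u *\<^sub>R x + v *\<^sub>R y)"
    using height_concave[of u a x y] uv by (simp add: v)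
  ultimately show "u *\<^sub>R p + v *\<^sub>R q \<in> RP a"
    using abs_le uv by (simp add: pq mem_RP_iff)
qed

lemma extreme_point_of_convex_iff:
  fixes S :: "'a::real_vector set"
  assumes "convex S"
  shows "v extreme_point_of S \<longleftrightarrow> v \<in> S \<and> (\<forall>w. v + w \<in> S \<longrightarrow> v - w \<in> S \<longrightarrow> w = 0)"
proof
  assume v: "v extreme_point_of S"
  have "w = 0" if "v + w \<in> S" "v - w \<in> S" for w
  proof (rule ccontr)
    assume "w \<noteq> 0"
    have "v - w \<noteq> v + w"
    proof
      assume "v - w = v + w"
      then have "2 *\<^sub>R w = 0"
        by (metis add.right_inverse add_left_cancel diff_conv_add_uminus scaleR_2)
      with \<open>w \<noteq> 0\<close> show False
        by simp
    qed
    moreover have "midpoint (v - w) (v + w) = v"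
      by (simp add: midpoint_def scaleR_2[symmetric] algebra_simps)
    ultimately show False
      using v that midpoint_in_open_segment[of "v - w" "v + w"] by (auto simp: extreme_point_of_def)
  qed
  with v show "v \<in> S \<and> (\<forall>w. v + w \<in> S \<longrightarrow> v - w \<in> S \<longrightarrow> w = 0)"
    by (auto simp: extreme_point_of_def)
next
  assume v: "v \<in> S \<and> (\<forall>w. v + w \<in> S \<longrightarrow> v - w \<in> S \<longrightarrow> w = 0)"
  show "v extreme_point_of S"
    unfolding extreme_point_of_def
  proof (intro conjI ballI notI)
    show "v \<in> S"
      using v by simp
    fix p q
    assume pq: "p \<in> S" "q \<in> S" and "v \<in> open_segment p q"
    then obtain u where u: "p \<noteq> q" "0 < u" "u < 1" "v = (1 - u) *\<^sub>R p + u *\<^sub>R q"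
      by (auto simp: in_segment)
    define c where "c = min u (1 - u)"
    have c: "0 < c" "c \<le> u" "c \<le> 1 - u"
      using u by (auto simp: c_def)
    have "v + c *\<^sub>R (q - p) = (1 - (u + c)) *\<^sub>R p + (u + c) *\<^sub>R q"
      "v - c *\<^sub>R (q - p) = (1 - (u - c)) *\<^sub>R p + (u - c) *\<^sub>R q"
      using u(4) by (simp_all add: algebra_simps)
    moreover have "(1 - (u + c)) *\<^sub>R p + (u + c) *\<^sub>R q \<in> S" "(1 - (u - c)) *\<^sub>R p + (u - c) *\<^sub>R q \<in> S"
      using c pq by (intro convexD[OF assms]; simp)+
    ultimately have "c *\<^sub>R (q - p) = 0"
      using v by metis
    then show False
      using c u by simp
  qed
qed

lemma extreme_point_RP_iff:
  "(x, t) extreme_point_of RP a \<longleftrightarrow> (x, t) \<in> RP a \<and>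
     (\<forall>d u. (x + d, t + u) \<in> RP a \<longrightarrow> (x - d, t - u) \<in> RP a \<longrightarrow> d = 0 \<and> u = 0)"
  unfolding extreme_point_of_convex_iff[OF convex_RP] by (simp add: prod_eq_iff)

lemma height_vec_update:
  "height a (\<chi> i. if i = k then c else x$i) = height a x - tent (a$k) (x$k) + tent (a$k) c"
proof -
  have "height a (\<chi> i. if i = k then c else x$i) = 1/2 + tent (a$k) c + (\<Sum>i\<in>UNIV - {k}. tent (a$i) (x$i))"
    "height a x = 1/2 + tent (a$k) (x$k) + (\<Sum>i\<in>UNIV - {k}. tent (a$i) (x$i))"
    unfolding height_def by (subst sum.remove[of UNIV k]; simp)+
  then show ?thesis
    by simp
qed

lemma height_add_axis: "height a (x + axis k s) = height a x - tent (a$k) (x$k) + tent (a$k) (x$k + s)"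
proof -
  have "x + axis k s = (\<chi> i. if i = k then x$k + s else x$i)"
    by (simp add: vec_eq_iff axis_def)
  then show ?thesis
    by (simp add: height_vec_update)
qed

lemma diff_axis_eq_add_axis: "(x :: real^'n) - axis k s = x + axis k (- s)"
  by (simp add: vec_eq_iff axis_def)

lemma in_box_add_axis:
  "in_box a x \<Longrightarrow> a$k - 1/2 \<le> x$k + s \<Longrightarrow> x$k + s \<le> a$k + 1/2 \<Longrightarrow> in_box a (x + axis k s)"
  by (auto simp: in_box_def axis_def)

lemma KS_insert: "k \<notin> S \<Longrightarrow> KS a S = KS a (insert k S) + 2 * Delta_a (a$k)"
proof -
  assume k: "k \<notin> S"
  then have "UNIV - S = insert k (UNIV - insert k S)"
    by auto
  with k show ?thesis
    by (simp add: KS_def DeltaS_def)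
qed

lemma tent_base_coord:
  assumes "0 < a$k" "a$k < 1/2" "labeled S \<epsilon>"
  shows "tent (a$k) (base_coord a S \<epsilon> k) = (if k \<in> S then - Delta_a (a$k) else Delta_a (a$k))"
proof (cases "k \<in> S")
  case True
  then have "\<epsilon> k = 0 \<or> \<epsilon> k = 1"
    using assms(3) by (simp add: labeled_def)
  then show ?thesis
    using True assms tent_box_ends[of "a$k"] by (auto simp: base_coord_def add.commute)
qed (simp add: base_coord_def tent_peak)

lemma height_base_coord:
  assumes a: "\<forall>i. 0 < a$i \<and> a$i < 1/2" and "labeled S \<epsilon>"
  shows "height a (\<chi> i. base_coord a S \<epsilon> i) = KS a S"
proof -
  have "height a (\<chi> i. base_coord a S \<epsilon> i) =
      1/2 + (\<Sum>i\<in>UNIV. if i \<in> S then - Delta_a (a$i) else Delta_a (a$i))"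
    unfolding height_def using a assms(2) by (simp add: tent_base_coord)
  also have "\<dots> = KS a S"
    by (simp add: sum.If_cases KS_def DeltaS_def sum_negf Compl_eq_Diff_UNIV)
  finally show ?thesis .
qed

lemma base_coord_breakpoint: "labeled S \<epsilon> \<Longrightarrow> base_coord a S \<epsilon> i \<in> tent_breakpoints (a$i)"
  by (auto simp: base_coord_def labeled_def tent_breakpoints_def)

lemma RP_symmetric_perturbation:
  assumes x: "\<bar>t\<bar> = height a x"
    and p: "(x + d, t + u) \<in> RP a" and m: "(x - d, t - u) \<in> RP a"
  shows "tent (a$i) (x$i + d$i) + tent (a$i) (x$i - d$i) = 2 * tent (a$i) (x$i)"
    and "height a (x + d) + height a (x - d) = 2 * height a x"
proof -
  define defect where
    "defect i = 2 * tent (a$i) (x$i) - tent (a$i) (x$i + d$i) - tent (a$i) (x$i - d$i)" for i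
  have defect_nonneg: "0 \<le> defect i" for i
    using tent_midpoint_le[of "a$i" "x$i" "d$i"] by (simp add: defect_def)
  have sum_eq: "height a (x + d) + height a (x - d) = 2 * height a x - (\<Sum>i\<in>UNIV. defect i)"
    by (simp add: height_def defect_def sum_subtractf sum_distrib_left sum.distrib algebra_simps)
  have "2 * \<bar>t\<bar> \<le> \<bar>t + u\<bar> + \<bar>t - u\<bar>"
    by linarith
  also have "\<dots> \<le> height a (x + d) + height a (x - d)"
    using p m by (intro add_mono) (simp_all add: mem_RP_iff)
  finally have "(\<Sum>i\<in>UNIV. defect i) \<le> 0"
    using sum_eq x by linarith
  moreover have "0 \<le> (\<Sum>i\<in>UNIV. defect i)"
    by (rule sum_nonneg) (rule defect_nonneg)
  ultimately have "(\<Sum>i\<in>UNIV. defect i) = 0"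
    by linarith
  then have "defect i = 0"
    using defect_nonneg by (simp add: sum_nonneg_eq_0_iff)
  then show "tent (a$i) (x$i + d$i) + tent (a$i) (x$i - d$i) = 2 * tent (a$i) (x$i)"
    by (simp add: defect_def)
  show "height a (x + d) + height a (x - d) = 2 * height a x"
    using sum_eq \<open>(\<Sum>i\<in>UNIV. defect i) = 0\<close> by simp
qed

lemma extreme_point_RPI:
  assumes a: "\<forall>i. 0 < a$i \<and> a$i < 1/2"
    and x: "(x, t) \<in> RP a" "\<bar>t\<bar> = height a x"
    and breakpoints: "\<forall>i. i \<noteq> k \<longrightarrow> x$i \<in> tent_breakpoints (a$i)"
    and k: "x$k \<in> tent_breakpoints (a$k) \<or> height a x = 0 \<or> \<bar>t\<bar> = 1"
  shows "(x, t) extreme_point_of RP a"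
  unfolding extreme_point_RP_iff
proof (intro conjI allI impI)
  show "(x, t) \<in> RP a"
    by (fact x)
  fix d u
  assume p: "(x + d, t + u) \<in> RP a" and m: "(x - d, t - u) \<in> RP a"
  note midpoint_eq = RP_symmetric_perturbation[OF x(2) p m]
  have bounds: "in_box a (x + d)" "in_box a (x - d)" "\<bar>t + u\<bar> \<le> height a (x + d)"
    "\<bar>t - u\<bar> \<le> height a (x - d)" "\<bar>t + u\<bar> \<le> 1" "\<bar>t - u\<bar> \<le> 1"
    using p m by (simp_all add: mem_RP_iff)
  have d_breakpoint: "d$i = 0" if "x$i \<in> tent_breakpoints (a$i)" for i
    using tent_midpoint_eq_at_breakpoint[OF that _ _ _ _ midpoint_eq(1)] bounds(1,2)
    by (simp add: in_box_def)
  have d_axis: "d = axis k (d$k)"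
    using d_breakpoint breakpoints by (auto simp: vec_eq_iff axis_def)
  have "d$k = 0"
  proof (cases "x$k \<in> tent_breakpoints (a$k)")
    case True
    then show ?thesis
      by (rule d_breakpoint)
  next
    case False
    \<comment> \<open>each of the two heights, summing to \<open>2 * height a x\<close>, is at least \<open>height a x\<close>\<close>
    have "height a (x + d) = height a x \<and> height a (x - d) = height a x"
      using k False midpoint_eq(2) bounds(3-6) x(2) by (auto simp: abs_le_iff)
    moreover have "x + d = x + axis k (d$k)" "x - d = x + axis k (- d$k)"
      by (subst d_axis; simp add: vec_eq_iff axis_def)+
    ultimately have "tent (a$k) (x$k + d$k) = tent (a$k) (x$k)" "tent (a$k) (x$k - d$k) = tent (a$k) (x$k)"
      by (simp_all add: height_add_axis)
    moreover have "x$k \<noteq> 1/2 - a$k"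
      using False by (simp add: tent_breakpoints_def)
    ultimately show ?thesis
      using tent_symmetric_eq_imp_zero a by blast
  qed
  then show "d = 0"
    using d_axis by simp
  then show "u = 0"
    using bounds(3,4) x(2) by (auto simp: abs_le_iff abs_if split: if_splits)
qed

lemma base_coord_update:
  assumes a: "\<forall>i. 0 < a$i \<and> a$i < 1/2" and lab: "labeled S \<epsilon>"
    and c: "a$k - 1/2 \<le> c" "c \<le> a$k + 1/2"
  defines "x \<equiv> \<chi> i. if i = k then c else base_coord a S \<epsilon> i"
  shows "height a x = KS a S - tent (a$k) (base_coord a S \<epsilon> k) + tent (a$k) c"
    and "in_box a x"
    and "\<forall>i. i \<noteq> k \<longrightarrow> x$i \<in> tent_breakpoints (a$i)"
proof -
  have "x = (\<chi> i. if i = k then c else (\<chi> j. base_coord a S \<epsilon> j)$i)"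
    by (simp add: x_def vec_eq_iff)
  then show "height a x = KS a S - tent (a$k) (base_coord a S \<epsilon> k) + tent (a$k) c"
    by (simp add: height_vec_update height_base_coord[OF a lab])
  show breakpoints: "\<forall>i. i \<noteq> k \<longrightarrow> x$i \<in> tent_breakpoints (a$i)"
    using base_coord_breakpoint[OF lab] by (simp add: x_def)
  show "in_box a x"
    unfolding in_box_def
  proof
    fix i
    show "a$i - 1/2 \<le> x$i \<and> x$i \<le> a$i + 1/2"
      using c breakpoints a tent_breakpoints_in_box[of "a$i" "x$i"]
      by (cases "i = k") (auto simp: x_def less_imp_le)
  qed
qed

lemma standard_vertices_extreme_point:
  assumes a: "\<forall>i. 0 < a$i \<and> a$i < 1/2" and v: "v \<in> standard_vertices a"
  shows "v extreme_point_of RP a"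
proof -
  obtain S \<epsilon> s where v_eq: "v = ((\<chi> i. base_coord a S \<epsilon> i), s * KS a S)"
    and lab: "labeled S \<epsilon>" and K: "0 \<le> KS a S" "KS a S \<le> 1" and s: "s \<in> {1, -1}"
    using v unfolding standard_vertices_def by blast
  let ?x = "\<chi> i. base_coord a S \<epsilon> i"
  have breakpoints: "?x$i \<in> tent_breakpoints (a$i)" for i
    using base_coord_breakpoint[OF lab] by simp
  then have "in_box a ?x"
    using a tent_breakpoints_in_box by (simp add: in_box_def less_imp_le)
  moreover have height: "height a ?x = KS a S"
    by (rule height_base_coord[OF a lab])
  moreover have "\<bar>s * KS a S\<bar> = KS a S"
    using s K by (auto simp: abs_mult)
  moreover obtain k :: 'a where True
    by blast
  ultimately show ?thesis
    using extreme_point_RPI[OF a, of ?x _ k] breakpoints K by (simp add: v_eq mem_RP_iff)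
qed

lemma middle_vertices_extreme_point:
  assumes a: "\<forall>i. 0 < a$i \<and> a$i < 1/2" and v: "v \<in> middle_vertices a"
  shows "v extreme_point_of RP a"
proof -
  obtain S \<epsilon> k where v_eq: "v = ((\<chi> i. if i = k then a$k - 1/2 + \<epsilon> k - KS a S / (2 * a$k - \<epsilon> k)
                               else base_coord a S \<epsilon> i), 0)"
    and lab: "labeled S \<epsilon>" and k: "k \<in> S" and K: "KS a S < 0" "0 < KS a (S - {k})"
    using v unfolding middle_vertices_def by blast
  have "\<epsilon> k \<in> {0, 1}"
    using lab k by (simp add: labeled_def)
  moreover have "- KS a S \<le> 2 * Delta_a (a$k)"
    using KS_insert[of k "S - {k}" a] k K by (simp add: insert_absorb)
  ultimately have c: "a$k - 1/2 \<le> a$k - 1/2 + \<epsilon> k - KS a S / (2 * a$k - \<epsilon> k)"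
    "a$k - 1/2 + \<epsilon> k - KS a S / (2 * a$k - \<epsilon> k) \<le> a$k + 1/2"
    "tent (a$k) (a$k - 1/2 + \<epsilon> k - KS a S / (2 * a$k - \<epsilon> k)) = - KS a S - Delta_a (a$k)"
    using tent_branch_point[of "a$k" "\<epsilon> k" "- KS a S"] a K by auto
  note x = base_coord_update[OF a lab c(1,2)]
  have "height a (\<chi> i. if i = k then a$k - 1/2 + \<epsilon> k - KS a S / (2 * a$k - \<epsilon> k)
                               else base_coord a S \<epsilon> i) = 0"
    using x(1) c(3) tent_base_coord[of a k S \<epsilon>] a lab k by simp
  then show ?thesis
    using extreme_point_RPI[OF a _ _ x(3)] x(2) by (simp add: v_eq mem_RP_iff)
qed

lemma truncating_vertices_extreme_point:
  assumes a: "\<forall>i. 0 < a$i \<and> a$i < 1/2" and v: "v \<in> truncating_vertices a"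
  shows "v extreme_point_of RP a"
proof -
  obtain S \<epsilon> k s where v_eq: "v = ((\<chi> i. if i = k then a$k - 1/2 + \<epsilon> k
                                 + (1 - KS a (insert k S)) / (2 * a$k - \<epsilon> k)
                               else base_coord a S \<epsilon> i), s)"
    and lab: "labeled S \<epsilon>" and k: "k \<notin> S" "\<epsilon> k \<in> {0, 1}"
    and K: "KS a (insert k S) < 1" "1 < KS a S" and s: "s \<in> {1, -1}"
    using v unfolding truncating_vertices_def by blast
  have KS_eq: "KS a S = KS a (insert k S) + 2 * Delta_a (a$k)"
    using KS_insert[OF k(1)] .
  then have c: "a$k - 1/2 \<le> a$k - 1/2 + \<epsilon> k + (1 - KS a (insert k S)) / (2 * a$k - \<epsilon> k)"
    "a$k - 1/2 + \<epsilon> k + (1 - KS a (insert k S)) / (2 * a$k - \<epsilon> k) \<le> a$k + 1/2"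
    "tent (a$k) (a$k - 1/2 + \<epsilon> k + (1 - KS a (insert k S)) / (2 * a$k - \<epsilon> k))
       = 1 - KS a (insert k S) - Delta_a (a$k)"
    using tent_branch_point[of "a$k" "\<epsilon> k" "1 - KS a (insert k S)"] a k(2) K by auto
  note x = base_coord_update[OF a lab c(1,2)]
  have "height a (\<chi> i. if i = k then a$k - 1/2 + \<epsilon> k + (1 - KS a (insert k S)) / (2 * a$k - \<epsilon> k)
                               else base_coord a S \<epsilon> i) = 1"
    using x(1) c(3) tent_base_coord[of a k S \<epsilon>] a lab k KS_eq by simp
  then show ?thesis
    using extreme_point_RPI[OF a _ _ x(3)] x(2) s by (auto simp: v_eq mem_RP_iff)
qed

lemma extreme_point_RP_boundary:
  assumes E: "(x, t) extreme_point_of RP a"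
  shows "\<bar>t\<bar> = 1 \<or> \<bar>t\<bar> = height a x"
proof (rule ccontr)
  have x: "in_box a x" "\<bar>t\<bar> \<le> 1" "\<bar>t\<bar> \<le> height a x"
    using E by (simp_all add: extreme_point_RP_iff mem_RP_iff)
  assume "\<not> (\<bar>t\<bar> = 1 \<or> \<bar>t\<bar> = height a x)"
  with x have "\<bar>t\<bar> < 1" "\<bar>t\<bar> < height a x"
    by auto
  define e where "e = min (1 - \<bar>t\<bar>) (height a x - \<bar>t\<bar>)"
  have e: "0 < e" "\<bar>t\<bar> + e \<le> 1" "\<bar>t\<bar> + e \<le> height a x"
    using \<open>\<bar>t\<bar> < 1\<close> \<open>\<bar>t\<bar> < height a x\<close> by (auto simp: e_def)
  have "\<bar>t + e\<bar> \<le> \<bar>t\<bar> + e" "\<bar>t - e\<bar> \<le> \<bar>t\<bar> + e"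
    using abs_triangle_ineq[of t e] abs_triangle_ineq4[of t e] e(1) by simp_all
  then have "(x + 0, t + e) \<in> RP a" "(x - 0, t - e) \<in> RP a"
    using e x(1) by (simp_all add: mem_RP_iff)
  then have "e = 0"
    using E unfolding extreme_point_RP_iff by blast
  with e(1) show False
    by simp
qed

lemma extreme_point_RP_at_box_end:
  assumes a: "\<forall>i. 0 < a$i \<and> a$i < 1/2" and E: "(x, t) extreme_point_of RP a"
    and h: "1 < height a x"
  shows "x$i = a$i - 1/2 \<or> x$i = a$i + 1/2"
proof (rule ccontr)
  assume "\<not> (x$i = a$i - 1/2 \<or> x$i = a$i + 1/2)"
  moreover have x: "in_box a x" "\<bar>t\<bar> \<le> 1"
    using E by (simp_all add: extreme_point_RP_iff mem_RP_iff)
  ultimately have inside: "a$i - 1/2 < x$i" "x$i < a$i + 1/2"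
    unfolding in_box_def by (auto simp: less_le)
  have t: "\<bar>t\<bar> = 1"
    using extreme_point_RP_boundary[OF E] x(2) h by auto
  define \<eta> where "\<eta> = min (min (x$i - (a$i - 1/2)) (a$i + 1/2 - x$i)) (height a x - 1)"
  have \<eta>: "0 < \<eta>"
    using inside h by (simp add: \<eta>_def)
  have shifted: "(x + axis i s, t) \<in> RP a" if "\<bar>s\<bar> \<le> \<eta>" for s
  proof -
    have "\<bar>tent (a$i) (x$i + s) - tent (a$i) (x$i)\<bar> \<le> \<bar>s\<bar>"
      using tent_lipschitz[of "a$i" "x$i + s" "x$i"] a by (simp add: less_imp_le)
    moreover have "\<bar>s\<bar> \<le> height a x - 1"
      using that by (simp add: \<eta>_def)
    ultimately have "1 \<le> height a (x + axis i s)"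
      unfolding height_add_axis abs_le_iff by linarith
    moreover have "in_box a (x + axis i s)"
      using that x(1) by (intro in_box_add_axis) (auto simp: \<eta>_def)
    ultimately show ?thesis
      using t by (simp add: mem_RP_iff)
  qed
  have "(x + axis i \<eta>, t + 0) \<in> RP a" "(x - axis i \<eta>, t - 0) \<in> RP a"
    using shifted[of \<eta>] shifted[of "- \<eta>"] \<eta> unfolding diff_axis_eq_add_axis by simp_all
  then have "axis i \<eta> = 0"
    using E unfolding extreme_point_RP_iff by blast
  with \<eta> show False
    by simp
qed

lemma extreme_point_RP_height_le_one:
  assumes a: "\<forall>i. 0 < a$i \<and> a$i < 1/2" and E: "(x, t) extreme_point_of RP a"
  shows "height a x \<le> 1"
proof (rule ccontr)
  assume "\<not> height a x \<le> 1"
  then have "x$i = a$i - 1/2 \<or> x$i = a$i + 1/2" for i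
    using extreme_point_RP_at_box_end[OF a E] by simp
  moreover have "0 < a$i" "a$i < 1/2" for i
    using a by simp_all
  ultimately have "tent (a$i) (x$i) < 0" for i
    using tent_box_ends[of "a$i"] Delta_a_pos[of "a$i"] by (metis less_imp_le neg_less_0_iff_less)
  then have "height a x \<le> 1/2"
    unfolding height_def by (simp add: sum_nonpos less_imp_le)
  with \<open>\<not> height a x \<le> 1\<close> show False
    by simp
qed

lemma abs_sign_mult_le:
  fixes c \<alpha> \<sigma> :: real
  assumes "\<bar>c\<bar> = 1" "\<bar>\<sigma>\<bar> \<le> 1" "0 \<le> \<alpha>"
  shows "\<bar>c * \<alpha> * \<sigma>\<bar> \<le> \<alpha>"
proof -
  have "\<bar>c * \<alpha> * \<sigma>\<bar> = \<alpha> * \<bar>\<sigma>\<bar>"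
    using assms by (simp add: abs_mult)
  also have "\<dots> \<le> \<alpha>"
    using assms by (simp add: mult_left_le)
  finally show ?thesis .
qed

lemma extreme_point_RP_unique_off_breakpoint:
  assumes a: "\<forall>i. 0 < a$i \<and> a$i < 1/2" and E: "(x, t) extreme_point_of RP a"
    and off: "x$i \<notin> tent_breakpoints (a$i)" "x$j \<notin> tent_breakpoints (a$j)"
  shows "i = j"
proof (rule ccontr)
  assume "i \<noteq> j"
  have x: "in_box a x" "\<bar>t\<bar> \<le> 1" "\<bar>t\<bar> \<le> height a x"
    using E by (simp_all add: extreme_point_RP_iff mem_RP_iff)
  have box: "a$k - 1/2 \<le> x$k" "x$k \<le> a$k + 1/2" for k
    using x(1) by (simp_all add: in_box_def)
  obtain \<eta>\<^sub>i \<sigma>\<^sub>i where i: "0 < \<eta>\<^sub>i" "\<sigma>\<^sub>i \<noteq> 0" "\<bar>\<sigma>\<^sub>i\<bar> < 1" and lin_i: "\<And>s. \<bar>s\<bar> \<le> \<eta>\<^sub>i \<Longrightarrow>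
      a$i - 1/2 \<le> x$i + s \<and> x$i + s \<le> a$i + 1/2 \<and> tent (a$i) (x$i + s) = tent (a$i) (x$i) + \<sigma>\<^sub>i * s"
    using tent_locally_linear[of "a$i" "x$i"] a box off(1) by blast
  obtain \<eta>\<^sub>j \<sigma>\<^sub>j where j: "0 < \<eta>\<^sub>j" "\<sigma>\<^sub>j \<noteq> 0" "\<bar>\<sigma>\<^sub>j\<bar> < 1" and lin_j: "\<And>s. \<bar>s\<bar> \<le> \<eta>\<^sub>j \<Longrightarrow>
      a$j - 1/2 \<le> x$j + s \<and> x$j + s \<le> a$j + 1/2 \<and> tent (a$j) (x$j + s) = tent (a$j) (x$j) + \<sigma>\<^sub>j * s"
    using tent_locally_linear[of "a$j" "x$j"] a box off(2) by blast
  define \<eta> where "\<eta> = min \<eta>\<^sub>i \<eta>\<^sub>j"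
  have \<eta>: "0 < \<eta>" "\<eta> \<le> \<eta>\<^sub>i" "\<eta> \<le> \<eta>\<^sub>j"
    using i j by (simp_all add: \<eta>_def)
  \<comment> \<open>moving \<open>x\<^sub>i\<close> by \<open>\<eta> \<sigma>\<^sub>j\<close> and \<open>x\<^sub>j\<close> by \<open>-\<eta> \<sigma>\<^sub>i\<close> leaves the height unchanged\<close>
  have shifted: "(x + axis i (c * \<eta> * \<sigma>\<^sub>j) + axis j (- c * \<eta> * \<sigma>\<^sub>i), t) \<in> RP a"
    if "\<bar>c\<bar> = 1" for c
  proof -
    have "\<bar>c * \<eta> * \<sigma>\<^sub>j\<bar> \<le> \<eta>\<^sub>i" "\<bar>- c * \<eta> * \<sigma>\<^sub>i\<bar> \<le> \<eta>\<^sub>j"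
      using abs_sign_mult_le[of c \<sigma>\<^sub>j \<eta>] abs_sign_mult_le[of "- c" \<sigma>\<^sub>i \<eta>] that i(3) j(3) \<eta>
      by simp_all
    note lin = lin_i[OF this(1)] lin_j[OF this(2)]
    have "(x + axis i (c * \<eta> * \<sigma>\<^sub>j))$j = x$j"
      using \<open>i \<noteq> j\<close> by (simp add: axis_def)
    then have "in_box a (x + axis i (c * \<eta> * \<sigma>\<^sub>j) + axis j (- c * \<eta> * \<sigma>\<^sub>i))"
      "height a (x + axis i (c * \<eta> * \<sigma>\<^sub>j) + axis j (- c * \<eta> * \<sigma>\<^sub>i)) = height a x"
      using lin x(1) by (simp_all add: in_box_add_axis height_add_axis)
    then show ?thesis
      using x by (simp add: mem_RP_iff)
  qed
  have minus: "x - (axis i (\<eta> * \<sigma>\<^sub>j) + axis j (- \<eta> * \<sigma>\<^sub>i))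
      = x + axis i (- 1 * \<eta> * \<sigma>\<^sub>j) + axis j (- (- 1) * \<eta> * \<sigma>\<^sub>i)"
    by (simp add: vec_eq_iff axis_def)
  have "(x + (axis i (\<eta> * \<sigma>\<^sub>j) + axis j (- \<eta> * \<sigma>\<^sub>i)), t + 0) \<in> RP a"
    "(x - (axis i (\<eta> * \<sigma>\<^sub>j) + axis j (- \<eta> * \<sigma>\<^sub>i)), t - 0) \<in> RP a"
    using shifted[of 1] shifted[of "- 1"] unfolding minus by (simp_all add: add.assoc)
  then have "axis i (\<eta> * \<sigma>\<^sub>j) + axis j (- \<eta> * \<sigma>\<^sub>i) = 0"
    using E unfolding extreme_point_RP_iff by blast
  then have "(axis i (\<eta> * \<sigma>\<^sub>j) + axis j (- \<eta> * \<sigma>\<^sub>i))$i = 0"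
    by simp
  then have "\<eta> * \<sigma>\<^sub>j = 0"
    using \<open>i \<noteq> j\<close> by (simp add: axis_def)
  with \<eta> j show False
    by simp
qed

lemma extreme_point_RP_off_breakpoint_height:
  assumes a: "\<forall>i. 0 < a$i \<and> a$i < 1/2" and E: "(x, t) extreme_point_of RP a"
    and off: "x$k \<notin> tent_breakpoints (a$k)"
  shows "height a x = 0 \<or> height a x = 1"
proof (rule ccontr)
  have x: "in_box a x" "\<bar>t\<bar> \<le> height a x"
    using E by (simp_all add: extreme_point_RP_iff mem_RP_iff)
  have le_one: "height a x \<le> 1"
    by (rule extreme_point_RP_height_le_one[OF a E])
  then have t: "\<bar>t\<bar> = height a x"
    using extreme_point_RP_boundary[OF E] x(2) by auto
  assume "\<not> (height a x = 0 \<or> height a x = 1)"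
  then have h: "0 < height a x" "height a x < 1"
    using t le_one by auto
  obtain \<eta> \<sigma> where lin: "0 < \<eta>" "\<bar>\<sigma>\<bar> < 1" "\<And>s. \<bar>s\<bar> \<le> \<eta> \<Longrightarrow>
      a$k - 1/2 \<le> x$k + s \<and> x$k + s \<le> a$k + 1/2 \<and> tent (a$k) (x$k + s) = tent (a$k) (x$k) + \<sigma> * s"
  proof -
    have "0 < a$k" "a$k < 1/2" "a$k - 1/2 \<le> x$k" "x$k \<le> a$k + 1/2"
      using a x(1) by (simp_all add: in_box_def)
    then show ?thesis
      using tent_locally_linear[of "a$k" "x$k"] off that by blast
  qed
  define \<alpha> where "\<alpha> = min \<eta> (min (height a x) (1 - height a x))"
  have \<alpha>: "0 < \<alpha>" "\<alpha> \<le> \<eta>" "\<alpha> \<le> height a x" "height a x + \<alpha> \<le> 1"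
    using lin(1) h by (auto simp: \<alpha>_def)
  define \<rho> where "\<rho> = (if 0 \<le> t then 1 else - 1 :: real)"
  have t_eq: "t = \<rho> * height a x"
    using t by (auto simp: \<rho>_def abs_if)
  \<comment> \<open>moving \<open>x\<^sub>k\<close> changes the height linearly, and \<open>t\<close> can follow it\<close>
  have shifted: "(x + axis k (c * \<alpha>), t + c * \<alpha> * \<sigma> * \<rho>) \<in> RP a" if c: "\<bar>c\<bar> = 1" for c
  proof -
    have small: "\<bar>c * \<alpha> * \<sigma>\<bar> \<le> \<alpha>"
      using abs_sign_mult_le[OF c] lin(2) \<alpha>(1) by simp
    then have "\<bar>c * \<alpha>\<bar> \<le> \<eta>"
      using c \<alpha> by (simp add: abs_mult)
    note lin_c = lin(3)[OF this]
    have "height a (x + axis k (c * \<alpha>)) = height a x + c * \<alpha> * \<sigma>"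
      using lin_c by (simp add: height_add_axis algebra_simps)
    moreover have "\<bar>t + c * \<alpha> * \<sigma> * \<rho>\<bar> = height a x + c * \<alpha> * \<sigma>"
    proof -
      have "t + c * \<alpha> * \<sigma> * \<rho> = \<rho> * (height a x + c * \<alpha> * \<sigma>)"
        by (simp add: t_eq algebra_simps)
      moreover have "0 \<le> height a x + c * \<alpha> * \<sigma>"
        using small \<alpha>(3) by (simp add: abs_le_iff)
      ultimately show ?thesis
        by (simp add: \<rho>_def abs_mult)
    qed
    moreover have "height a x + c * \<alpha> * \<sigma> \<le> 1"
      using small \<alpha>(4) by (simp add: abs_le_iff)
    moreover have "in_box a (x + axis k (c * \<alpha>))"
      using lin_c x(1) by (simp add: in_box_add_axis)
    ultimately show ?thesis
      by (simp add: mem_RP_iff)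
  qed
  have "(x + axis k \<alpha>, t + \<alpha> * \<sigma> * \<rho>) \<in> RP a" "(x - axis k \<alpha>, t - \<alpha> * \<sigma> * \<rho>) \<in> RP a"
    using shifted[of 1] shifted[of "- 1"] by (simp_all add: diff_axis_eq_add_axis)
  then have "axis k \<alpha> = 0"
    using E unfolding extreme_point_RP_iff by blast
  with \<alpha>(1) show False
    by simp
qed

lemma off_breakpoint_vertex_mem:
  assumes lab: "labeled S \<epsilon>" and k: "k \<in> S"
    and u: "0 < u" "u < 2 * Delta_a (a$k)"
    and t: "\<bar>t\<bar> = KS a S + u" "\<bar>t\<bar> = 0 \<or> \<bar>t\<bar> = 1"
  defines "x \<equiv> \<chi> i. if i = k then a$k - 1/2 + \<epsilon> k + u / (2 * a$k - \<epsilon> k) else base_coord a S \<epsilon> i"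
  shows "(x, t) \<in> middle_vertices a \<union> truncating_vertices a"
  using t(2)
proof
  assume "\<bar>t\<bar> = 0"
  then have "KS a S < 0" "0 < KS a (S - {k})" "u = - KS a S"
    using t(1) u KS_insert[of k "S - {k}" a] k by (simp_all add: insert_absorb)
  moreover have "x = (\<chi> i. if i = k then a$k - 1/2 + \<epsilon> k - KS a S / (2 * a$k - \<epsilon> k)
                               else base_coord a S \<epsilon> i)"
  proof -
    have "u / (2 * a$k - \<epsilon> k) = - (KS a S / (2 * a$k - \<epsilon> k))"
      using \<open>u = - KS a S\<close> by simp
    then show ?thesis
      by (simp add: x_def vec_eq_iff)
  qed
  ultimately have "(x, t) \<in> middle_vertices a"
    unfolding middle_vertices_def using lab k \<open>\<bar>t\<bar> = 0\<close> by auto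
  then show ?thesis
    by simp
next
  assume "\<bar>t\<bar> = 1"
  define T where "T = S - {k}"
  have T: "k \<notin> T" "insert k T = S" "labeled T \<epsilon>"
    using k lab by (auto simp: T_def labeled_def)
  have "KS a (insert k T) < 1" "1 < KS a T" "u = 1 - KS a (insert k T)"
    using t(1) u KS_insert[OF T(1), of a] \<open>\<bar>t\<bar> = 1\<close> T(2) by simp_all
  moreover have "x = (\<chi> i. if i = k then a$k - 1/2 + \<epsilon> k + (1 - KS a (insert k T)) / (2 * a$k - \<epsilon> k)
                               else base_coord a T \<epsilon> i)"
    using \<open>u = 1 - KS a (insert k T)\<close> by (simp add: x_def vec_eq_iff base_coord_def T_def)
  moreover have "\<epsilon> k \<in> {0, 1}" "t \<in> {1, -1}"
    using lab k \<open>\<bar>t\<bar> = 1\<close> by (auto simp: labeled_def abs_if split: if_splits)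
  ultimately have "(x, t) \<in> truncating_vertices a"
    unfolding truncating_vertices_def using T by blast
  then show ?thesis
    by simp
qed

lemma extreme_point_RP_in_vertices:
  assumes a: "\<forall>i. 0 < a$i \<and> a$i < 1/2" and E: "(x, t) extreme_point_of RP a"
  shows "(x, t) \<in> standard_vertices a \<union> middle_vertices a \<union> truncating_vertices a"
proof -
  define S where "S = {i. x$i \<noteq> 1/2 - a$i}"
  define \<epsilon> where "\<epsilon> i = (if 1/2 - a$i < x$i then 1 else 0 :: real)" for i
  have lab: "labeled S \<epsilon>"
    by (simp add: labeled_def \<epsilon>_def)
  have base: "x$i = base_coord a S \<epsilon> i" if "x$i \<in> tent_breakpoints (a$i)" for i
    using that a[rule_format, of i] by (auto simp: base_coord_def tent_breakpoints_def S_def \<epsilon>_def)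
  have box: "a$i - 1/2 \<le> x$i" "x$i \<le> a$i + 1/2" for i
    using E by (simp_all add: extreme_point_RP_iff mem_RP_iff in_box_def)
  have le_one: "height a x \<le> 1"
    by (rule extreme_point_RP_height_le_one[OF a E])
  have t: "\<bar>t\<bar> = height a x"
    using extreme_point_RP_boundary[OF E] le_one E by (auto simp: extreme_point_RP_iff mem_RP_iff)
  show ?thesis
  proof (cases "\<forall>i. x$i \<in> tent_breakpoints (a$i)")
    case True
    then have x_eq: "x = (\<chi> i. base_coord a S \<epsilon> i)"
      using base by (simp add: vec_eq_iff)
    define s where "s = (if 0 \<le> t then 1 else - 1 :: real)"
    have KS: "height a x = KS a S"
      using height_base_coord[OF a lab] by (simp add: x_eq)
    then have "0 \<le> KS a S" "KS a S \<le> 1"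
      using t le_one abs_ge_zero[of t] by linarith+
    moreover have "t = s * KS a S" "s \<in> {1, -1}"
      using t KS by (auto simp: s_def abs_if)
    ultimately have "(x, t) \<in> standard_vertices a"
      unfolding standard_vertices_def using x_eq lab by blast
    then show ?thesis
      by simp
  next
    case False
    then obtain k where k: "x$k \<notin> tent_breakpoints (a$k)"
      by blast
    have "k \<in> S"
      using k by (auto simp: S_def tent_breakpoints_def)
    have ak: "0 < a$k" "a$k < 1/2"
      using a by simp_all
    define y where "y = x$k"
    have y: "a$k - 1/2 \<le> y" "y \<le> a$k + 1/2" "y \<notin> tent_breakpoints (a$k)"
      using box k by (simp_all add: y_def)
    have x_eq: "x = (\<chi> i. if i = k then y else base_coord a S \<epsilon> i)"
      using base extreme_point_RP_unique_off_breakpoint[OF a E k] by (auto simp: vec_eq_iff y_def)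
    define u where "u = tent (a$k) y + Delta_a (a$k)"
    have u: "0 < u" "u < 2 * Delta_a (a$k)" "y = a$k - 1/2 + \<epsilon> k + u / (2 * a$k - \<epsilon> k)"
      using tent_branch_inverse[OF ak y] by (simp_all add: u_def \<epsilon>_def y_def)
    have "\<bar>t\<bar> = KS a S + u"
      using base_coord_update(1)[OF a lab y(1,2)] tent_base_coord[OF ak lab] \<open>k \<in> S\<close> t
      by (simp add: x_eq u_def)
    moreover have "\<bar>t\<bar> = 0 \<or> \<bar>t\<bar> = 1"
      using extreme_point_RP_off_breakpoint_height[OF a E k] t by simp
    ultimately have "(x, t) \<in> middle_vertices a \<union> truncating_vertices a"
      unfolding x_eq u(3) by (rule off_breakpoint_vertex_mem[OF lab \<open>k \<in> S\<close> u(1,2)])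
    then show ?thesis
      by blast
  qed
qed

theorem theorem4p2:
  fixes a :: "real^'m"
  assumes "\<forall>i. 0 < a$i \<and> a$i < 1/2"
  shows "{v. v extreme_point_of RP a} =
           standard_vertices a \<union> middle_vertices a \<union> truncating_vertices a"
  using extreme_point_RP_in_vertices[OF assms] standard_vertices_extreme_point[OF assms]
    middle_vertices_extreme_point[OF assms] truncating_vertices_extreme_point[OF assms]
  by fast

end
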